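(* Under the hypotheses: $N\ge M$, $d_i>0$ for all $i$, $\mathbf{P}\in\mathbb{Z}_{\ge0}^N$ with $P_N>0$, $\mathbf{L}\in\mathbb{R}^{N\times M}$ full rank with non-negative entries and $L_{N,j}>0$ for all $j$, let $\boldsymbol\alpha^{(0)}\in\mathbb{R}^M$ have all components strictly positive and define $\boldsymbol\alpha^{(n+1)}=\mathbf{T}(\boldsymbol\alpha^{(n)})$. If the sequence $(\boldsymbol\alpha^{(n)})$ converges, then its limit satisfies both KKT conditions ($\tilde\alpha_j\partial_jl(\tilde{\boldsymbol\alpha})=0$ for all $j$, and $\partial_jl(\tilde{\boldsymbol\alpha})\le0$ whenever $\tilde\alpha_j=0$) and is therefore the unique maximizer of $l$ on the non-negative orthant.
   Context: $l(\boldsymbol\alpha)=\sum_{i=1}^N\big(P_i\log d_i-(\mathbf{L}\boldsymbol\alpha)_iP_i-d_i e^{-(\mathbf{L}\boldsymbol\alpha)_i}-\log(P_i!)\big)$ for $\boldsymbol\alpha\ge0$, with $\partial_j l(\boldsymbol\alpha)=\sum_i L_{i,j}\big(d_ie^{-(\mathbf{L}\boldsymbol\alpha)_i}-P_i\big)$. The map $\mathbf{T}$ is $\mathbf{T}(\boldsymbol\alpha)_j=\dfrac{(\mathbf{L}^T(\mathbf{d}\odot e^{-\mathbf{L}\boldsymbol\alpha}))_j}{(\mathbf{L}^T\mathbf{P})_j}\alpha_j$, with $\odot$ the componentwise product and the exponential taken componentwise. *)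

theory Defs
  imports "HOL-Analysis.Analysis"
begin

text \<open>Rows are indexed by the finite type 'n (N = CARD('n)), columns by 'm (M = CARD('m)).
  L :: real^'m^'n is the N x M matrix, d :: real^'n, P :: 'n => nat (counts),
  alpha :: real^'m.\<close>

definition loglik :: "real^'m^'n \<Rightarrow> real^'n \<Rightarrow> ('n::finite \<Rightarrow> nat) \<Rightarrow> real^'m \<Rightarrow> real" where
  "loglik L d P \<alpha> = (\<Sum>i\<in>UNIV. real (P i) * ln (d$i) - (L *v \<alpha>)$i * real (P i)
       - d$i * exp (- (L *v \<alpha>)$i) - ln (fact (P i)))"

definition dloglik :: "real^'m^'n \<Rightarrow> real^'n \<Rightarrow> ('n::finite \<Rightarrow> nat) \<Rightarrow> real^'m \<Rightarrow> 'm \<Rightarrow> real" where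
  "dloglik L d P \<alpha> j = (\<Sum>i\<in>UNIV. L$i$j * (d$i * exp (- (L *v \<alpha>)$i) - real (P i)))"

definition Tmap :: "real^'m^'n \<Rightarrow> real^'n \<Rightarrow> ('n::finite \<Rightarrow> nat) \<Rightarrow> real^'m \<Rightarrow> real^'m" where
  "Tmap L d P \<alpha> = (\<chi> j. (\<Sum>i\<in>UNIV. L$i$j * (d$i * exp (- (L *v \<alpha>)$i)))
                         / (\<Sum>i\<in>UNIV. L$i$j * real (P i)) * \<alpha>$j)"

end

theory Submission
  imports Defs
begin

text \<open>On the one hand, the update is multiplicative:
  \<open>T(\<alpha>)\<^sub>j = (1 + \<partial>\<^sub>jl(\<alpha>) / (L\<^sup>T P)\<^sub>j) \<alpha>\<^sub>j\<close>, so iterates stay positive and a limit is a fixed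
  point, i.e. \<open>\<alpha>\<^sub>j \<partial>\<^sub>jl(\<alpha>) = 0\<close>. If \<open>\<alpha>\<^sub>j = 0\<close> but \<open>\<partial>\<^sub>jl(\<alpha>) > 0\<close>, then by continuity the
  \<open>j\<close>-th component is eventually non-decreasing and positive, so its limit cannot be \<open>0\<close>.
  On the other hand, \<open>l\<close> is a sum of the strictly concave functions
  \<open>t \<mapsto> -P\<^sub>i t - d\<^sub>i e\<^sup>-\<^sup>t\<close> of the coordinates of \<open>L\<alpha>\<close>; since \<open>L\<close> is injective, \<open>l\<close> lies strictly
  below its tangent plane at \<open>\<alpha>\<close> away from \<open>\<alpha>\<close>, and the KKT conditions make the tangent plane
  non-increasing in every feasible direction.\<close>

lemma poisson_term_tangent:
  fixes u v d p :: real
  assumes "d > 0"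
  shows "(- u * p - d * exp (-u)) - (- v * p - d * exp (-v)) \<le> (d * exp (-v) - p) * (u - v)"
    and "u \<noteq> v \<Longrightarrow>
           (- u * p - d * exp (-u)) - (- v * p - d * exp (-v)) < (d * exp (-v) - p) * (u - v)"
proof -
  have exp_u: "exp (-u) = exp (-v) * exp (-(u - v))"
    by (simp flip: exp_add)
  have "d * exp (-v) * (1 - (u - v)) \<le> d * exp (-v) * exp (-(u - v))"
    using assms by (intro mult_left_mono exp_minus_ge) auto
  then show "(- u * p - d * exp (-u)) - (- v * p - d * exp (-v)) \<le> (d * exp (-v) - p) * (u - v)"
    by (simp add: exp_u algebra_simps)
  assume "u \<noteq> v"
  then have "d * exp (-v) * (1 - (u - v)) < d * exp (-v) * exp (-(u - v))"
    using assms exp_minus_greater[of "u - v"] by (intro mult_strict_left_mono) auto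
  then show "(- u * p - d * exp (-u)) - (- v * p - d * exp (-v)) < (d * exp (-v) - p) * (u - v)"
    by (simp add: exp_u algebra_simps)
qed

definition poisson_residual ::
    "real^'m^'n \<Rightarrow> real^'n \<Rightarrow> ('n::finite \<Rightarrow> nat) \<Rightarrow> real^'m \<Rightarrow> real^'n" where
  "poisson_residual L d P \<alpha> = (\<chi> i. d$i * exp (- (L *v \<alpha>)$i) - real (P i))"

lemma dloglik_eq_residual_mult: "dloglik L d P \<alpha> j = (poisson_residual L d P \<alpha> v* L) $ j"
  by (simp add: dloglik_def poisson_residual_def vector_matrix_mult_def mult.commute)

lemma directional_dloglik_eq_inner:
  "(\<Sum>j\<in>UNIV. (\<beta>$j - \<alpha>$j) * dloglik L d P \<alpha> j)
     = poisson_residual L d P \<alpha> \<bullet> (L *v \<beta> - L *v \<alpha>)"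
proof -
  have "(\<Sum>j\<in>UNIV. (\<beta>$j - \<alpha>$j) * dloglik L d P \<alpha> j) = (poisson_residual L d P \<alpha> v* L) \<bullet> (\<beta> - \<alpha>)"
    by (simp add: inner_vec_def dloglik_eq_residual_mult mult.commute)
  also have "\<dots> = poisson_residual L d P \<alpha> \<bullet> (L *v \<beta> - L *v \<alpha>)"
    by (simp add: dot_lmul_matrix matrix_vector_mult_diff_distrib)
  finally show ?thesis .
qed

lemma loglik_lt_tangent:
  assumes d_pos: "\<forall>i. d$i > 0" and "L *v \<beta> \<noteq> L *v \<alpha>"
  shows "loglik L d P \<beta> < loglik L d P \<alpha> + (\<Sum>j\<in>UNIV. (\<beta>$j - \<alpha>$j) * dloglik L d P \<alpha> j)"
proof -
  define u where "u = L *v \<beta>"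
  define v where "v = L *v \<alpha>"
  define c where "c = poisson_residual L d P \<alpha>"
  define g where "g i t = - t * real (P i) - d$i * exp (-t)" for i t
  obtain i0 where i0: "u$i0 \<noteq> v$i0"
    using assms(2) by (auto simp: u_def v_def vec_eq_iff)
  have c_nth: "c$i = d$i * exp (- v$i) - real (P i)" for i
    by (simp add: c_def v_def poisson_residual_def)
  have "loglik L d P \<beta> - loglik L d P \<alpha> = (\<Sum>i\<in>UNIV. g i (u$i) - g i (v$i))"
    by (simp add: loglik_def u_def v_def g_def flip: sum_subtractf) (simp add: algebra_simps)
  also have "\<dots> < (\<Sum>i\<in>UNIV. c$i * (u$i - v$i))"
  proof (rule sum_strict_mono_ex1)
    show "\<forall>i\<in>UNIV. g i (u$i) - g i (v$i) \<le> c$i * (u$i - v$i)"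
      unfolding g_def c_nth by (intro ballI poisson_term_tangent(1)) (use d_pos in auto)
    show "\<exists>i\<in>UNIV. g i (u$i) - g i (v$i) < c$i * (u$i - v$i)"
      unfolding g_def c_nth by (intro bexI[of _ i0] poisson_term_tangent(2)) (use d_pos i0 in auto)
  qed simp
  also have "\<dots> = (\<Sum>j\<in>UNIV. (\<beta>$j - \<alpha>$j) * dloglik L d P \<alpha> j)"
    by (simp add: directional_dloglik_eq_inner inner_vec_def u_def v_def c_def)
  finally show ?thesis by simp
qed

lemma loglik_lt_at_KKT_point:
  assumes d_pos: "\<forall>i. d$i > 0" and inj: "inj ((*v) L)"
    and complementary: "\<forall>j. \<alpha>$j * dloglik L d P \<alpha> j = 0"
    and sign: "\<forall>j. \<alpha>$j = 0 \<longrightarrow> dloglik L d P \<alpha> j \<le> 0"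
    and feasible: "\<forall>j. \<beta>$j \<ge> 0" and "\<beta> \<noteq> \<alpha>"
  shows "loglik L d P \<beta> < loglik L d P \<alpha>"
proof -
  have "L *v \<beta> \<noteq> L *v \<alpha>"
    using inj \<open>\<beta> \<noteq> \<alpha>\<close> by (meson injD)
  then have tangent: "loglik L d P \<beta>
      < loglik L d P \<alpha> + (\<Sum>j\<in>UNIV. (\<beta>$j - \<alpha>$j) * dloglik L d P \<alpha> j)"
    by (rule loglik_lt_tangent[OF d_pos])
  have "(\<beta>$j - \<alpha>$j) * dloglik L d P \<alpha> j \<le> 0" for j
  proof (cases "\<alpha>$j = 0")
    case True
    then show ?thesis using sign feasible by (simp add: mult_nonneg_nonpos)
  next
    case False
    then show ?thesis using complementary[rule_format, of j] by simp
  qed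
  then have "(\<Sum>j\<in>UNIV. (\<beta>$j - \<alpha>$j) * dloglik L d P \<alpha> j) \<le> 0"
    by (rule sum_nonpos)
  with tangent show ?thesis by linarith
qed

lemma tendsto_pos_if_eventually_nondecreasing:
  fixes x :: "nat \<Rightarrow> real"
  assumes "x \<longlonglongrightarrow> l" and pos: "\<And>n. x n > 0"
    and "eventually (\<lambda>n. x n \<le> x (Suc n)) sequentially"
  shows "l > 0"
proof -
  obtain N where N: "\<And>n. n \<ge> N \<Longrightarrow> x n \<le> x (Suc n)"
    using assms(3) by (auto simp: eventually_sequentially)
  have "x N \<le> x n" if "n \<ge> N" for n
    using that
  proof (induction n rule: dec_induct)
    case (step n)
    then show ?case using N[of n] by linarith
  qed simp
  then have "x N \<le> l"
    by (intro LIMSEQ_le_const[OF assms(1)]) auto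
  with pos[of N] show ?thesis by simp
qed

lemma isCont_dloglik: "isCont (\<lambda>\<alpha>. dloglik L d P \<alpha> j) \<alpha>"
  unfolding dloglik_def by (intro continuous_intros matrix_vector_mult_linear_continuous_at)

definition weighted_counts :: "real^'m^'n \<Rightarrow> ('n::finite \<Rightarrow> nat) \<Rightarrow> 'm \<Rightarrow> real" where
  "weighted_counts L P j = (\<Sum>i\<in>UNIV. L$i$j * real (P i))"

locale poisson_em =
  fixes L :: "real^'m::finite^'n::finite" and d :: "real^'n" and P :: "'n \<Rightarrow> nat" and r :: 'n
  assumes d_pos: "d$i > 0"
    and P_r_pos: "P r > 0"
    and L_nonneg: "L$i$j \<ge> 0"
    and L_r_pos: "L$r$j > 0"
begin

lemma weighted_counts_pos: "weighted_counts L P j > 0"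
  unfolding weighted_counts_def
  by (rule sum_pos2[of _ r]) (use L_nonneg L_r_pos P_r_pos in auto)

lemma dloglik_gt_neg_weighted_counts: "dloglik L d P \<alpha> j > - weighted_counts L P j"
proof -
  have "(\<Sum>i\<in>UNIV. L$i$j * (d$i * exp (- (L *v \<alpha>)$i))) > 0"
  proof (rule sum_pos2[of _ r])
    show "0 \<le> L$i$j * (d$i * exp (- (L *v \<alpha>)$i))" for i
      using L_nonneg[of i j] d_pos[of i] by simp
    show "0 < L$r$j * (d$r * exp (- (L *v \<alpha>)$r))"
      using L_r_pos d_pos by simp
  qed simp_all
  then show ?thesis
    by (simp add: dloglik_def weighted_counts_def right_diff_distrib sum_subtractf)
qed

lemma Tmap_nth:
  "Tmap L d P \<alpha> $ j = (1 + dloglik L d P \<alpha> j / weighted_counts L P j) * \<alpha>$j"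
  using weighted_counts_pos[of j]
  by (simp add: Tmap_def dloglik_def weighted_counts_def right_diff_distrib sum_subtractf
      field_simps)

lemma Tmap_factor_pos: "1 + dloglik L d P \<alpha> j / weighted_counts L P j > 0"
  using dloglik_gt_neg_weighted_counts[where \<alpha> = \<alpha> and j = j] weighted_counts_pos[of j]
  by (simp add: field_simps)

end

locale poisson_em_convergent_iteration = poisson_em +
  fixes \<alpha>0 \<alpha> :: "real^'m"
  assumes init_pos: "\<alpha>0$j > 0"
    and iterates_tendsto: "(\<lambda>n. (Tmap L d P ^^ n) \<alpha>0) \<longlonglongrightarrow> \<alpha>"
begin

abbreviation iterate :: "nat \<Rightarrow> real^'m" where
  "iterate n \<equiv> (Tmap L d P ^^ n) \<alpha>0"

lemma iterate_Suc_nth: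
  "iterate (Suc n) $ j = (1 + dloglik L d P (iterate n) j / weighted_counts L P j) * iterate n $ j"
  by (simp add: Tmap_nth)

lemma iterate_pos: "iterate n $ j > 0"
proof (induction n)
  case 0
  show ?case by (simp add: init_pos)
next
  case (Suc n)
  show ?case
    unfolding iterate_Suc_nth using Tmap_factor_pos Suc.IH by (rule mult_pos_pos)
qed

lemma iterate_nth_tendsto: "(\<lambda>n. iterate n $ j) \<longlonglongrightarrow> \<alpha>$j"
  by (rule tendsto_vec_nth[OF iterates_tendsto])

lemma dloglik_iterate_tendsto: "(\<lambda>n. dloglik L d P (iterate n) j) \<longlonglongrightarrow> dloglik L d P \<alpha> j"
  by (rule isCont_tendsto_compose[OF isCont_dloglik iterates_tendsto])

lemma limit_nonneg: "\<alpha>$j \<ge> 0"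
  by (rule LIMSEQ_le_const[OF iterate_nth_tendsto]) (auto intro: less_imp_le iterate_pos)

lemma limit_complementary: "\<alpha>$j * dloglik L d P \<alpha> j = 0"
proof -
  have "(\<lambda>n. iterate (Suc n) $ j)
          \<longlonglongrightarrow> (1 + dloglik L d P \<alpha> j / weighted_counts L P j) * \<alpha>$j"
    unfolding iterate_Suc_nth
    using weighted_counts_pos[of j]
    by (intro tendsto_intros dloglik_iterate_tendsto iterate_nth_tendsto) auto
  moreover have "(\<lambda>n. iterate (Suc n) $ j) \<longlonglongrightarrow> \<alpha>$j"
    using iterate_nth_tendsto by (rule LIMSEQ_Suc)
  ultimately have "\<alpha>$j = (1 + dloglik L d P \<alpha> j / weighted_counts L P j) * \<alpha>$j"
    using LIMSEQ_unique by blast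
  then show ?thesis
    using weighted_counts_pos[of j] by (simp add: field_simps)
qed

lemma limit_sign:
  assumes "\<alpha>$j = 0"
  shows "dloglik L d P \<alpha> j \<le> 0"
proof (rule ccontr)
  assume "\<not> dloglik L d P \<alpha> j \<le> 0"
  then have "eventually (\<lambda>n. dloglik L d P (iterate n) j > 0) sequentially"
    using order_tendstoD(1)[OF dloglik_iterate_tendsto] by simp
  then have "eventually (\<lambda>n. iterate n $ j \<le> iterate (Suc n) $ j) sequentially"
  proof (rule eventually_mono)
    fix n
    assume "dloglik L d P (iterate n) j > 0"
    then have "0 \<le> dloglik L d P (iterate n) j / weighted_counts L P j * iterate n $ j"
      using weighted_counts_pos[of j] iterate_pos[of n j] by simp
    then show "iterate n $ j \<le> iterate (Suc n) $ j"
      unfolding iterate_Suc_nth by (simp add: distrib_right)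
  qed
  then have "\<alpha>$j > 0"
    using tendsto_pos_if_eventually_nondecreasing iterate_nth_tendsto iterate_pos by blast
  with assms show False by simp
qed

end

theorem mainTheorem3:
  fixes L :: "real^'m::finite^'n::finite" and d :: "real^'n" and P :: "'n \<Rightarrow> nat"
    and r :: 'n and \<alpha>0 :: "real^'m" and \<alpha>lim :: "real^'m"
  assumes NM: "CARD('n) \<ge> CARD('m)"
    and dpos: "\<forall>i. d$i > 0"
    and Pr: "P r > 0"
    and rankL: "rank L = CARD('m)"
    and Lnn: "\<forall>i j. L$i$j \<ge> 0"
    and Lr: "\<forall>j. L$r$j > 0"
    and a0: "\<forall>j. \<alpha>0$j > 0"
    and conv: "(\<lambda>n. (Tmap L d P ^^ n) \<alpha>0) \<longlonglongrightarrow> \<alpha>lim"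
  shows "(\<forall>j. \<alpha>lim$j * dloglik L d P \<alpha>lim j = 0)
       \<and> (\<forall>j. \<alpha>lim$j = 0 \<longrightarrow> dloglik L d P \<alpha>lim j \<le> 0)
       \<and> (\<forall>j. \<alpha>lim$j \<ge> 0)
       \<and> (\<forall>\<beta>::real^'m. (\<forall>j. \<beta>$j \<ge> 0) \<longrightarrow> \<beta> \<noteq> \<alpha>lim \<longrightarrow> loglik L d P \<beta> < loglik L d P \<alpha>lim)"
proof -
  \<comment> \<open>\<open>NM\<close> is implied by \<open>rankL\<close> and not needed.\<close>
  interpret poisson_em_convergent_iteration L d P r \<alpha>0 \<alpha>lim
    using dpos Pr Lnn Lr a0 conv by unfold_locales auto
  have inj: "inj ((*v) L)"
    using rankL by (simp add: full_rank_injective)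
  have KKT: "\<forall>j. \<alpha>lim$j * dloglik L d P \<alpha>lim j = 0"
            "\<forall>j. \<alpha>lim$j = 0 \<longrightarrow> dloglik L d P \<alpha>lim j \<le> 0"
    using limit_complementary limit_sign by auto
  show ?thesis
    using KKT limit_nonneg loglik_lt_at_KKT_point[OF dpos inj KKT] by blast
qed

end
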